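(* Let $n\ge2$ and $0\le r_l\le r_u<1$. For all $x,y\in\mathbb{B}^n$ with $r_l\le|x|\le|y|\le r_u$, $$\frac{1+r_l}{2}\,\mathrm{th}\frac{\rho_{\mathbb{B}^n}(x,y)}{2}\le p_{\mathbb{B}^n}(x,y)\le\frac{1+r_u^2}{2\sqrt{1-2r_u+2r_u^2}}\,\mathrm{th}\frac{\rho_{\mathbb{B}^n}(x,y)}{2},$$ and these are the best possible constants depending only on $r_l$ and $r_u$.
   Context: $\mathbb{B}^n$ is the unit ball of $\mathbb{R}^n$. For a domain $G\subsetneq\mathbb{R}^n$ and $x\in G$, $d_G(x)=\inf\{|x-z|:z\in\partial G\}$. The hyperbolic metric of the unit ball satisfies $\mathrm{th}\frac{\rho_{\mathbb{B}^n}(x,y)}{2}=\frac{|x-y|}{\sqrt{|x-y|^2+(1-|x|^2)(1-|y|^2)}}$. The point pair function is $p_G(x,y)=\frac{|x-y|}{\sqrt{|x-y|^2+4d_G(x)d_G(y)}}$. *)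

theory Defs
  imports "HOL-Analysis.Analysis"
begin

definition dist_bd :: "'a::euclidean_space set \<Rightarrow> 'a \<Rightarrow> real" where
  "dist_bd G x = infdist x (frontier G)"

definition ppf :: "'a::euclidean_space set \<Rightarrow> 'a \<Rightarrow> 'a \<Rightarrow> real" where
  "ppf G x y = norm (x - y) / sqrt ((norm (x - y))\<^sup>2 + 4 * dist_bd G x * dist_bd G y)"

text \<open>Hyperbolic metric of the unit ball, via th(rho/2) = formula.\<close>
definition rho_ball :: "'a::euclidean_space \<Rightarrow> 'a \<Rightarrow> real" where
  "rho_ball x y = 2 * artanh (norm (x - y) /
      sqrt ((norm (x - y))\<^sup>2 + (1 - (norm x)\<^sup>2) * (1 - (norm y)\<^sup>2)))"

end

theory Submission
  imports Defs
begin

text \<open>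
  With \<open>a = |x|\<close>, \<open>b = |y|\<close> and \<open>u = |x - y|\<close>, both quantities have the form
  \<open>u / sqrt (u\<^sup>2 + C)\<close>: \<open>C = (1 - a\<^sup>2)(1 - b\<^sup>2)\<close> for \<open>th (\<rho>/2)\<close> and \<open>C = 4(1 - a)(1 - b)\<close> for
  \<open>p\<close>. Hence \<open>(p / th)\<^sup>2 = (u\<^sup>2 + (1 - a\<^sup>2)(1 - b\<^sup>2)) / (u\<^sup>2 + 4(1 - a)(1 - b))\<close>, which is
  increasing in \<open>u\<close> because the first constant is the smaller one. As \<open>u \<rightarrow> 0\<close> it tends to
  \<open>(1 + a)(1 + b)/4 \<ge> (1 + r\<^sub>l)\<^sup>2/4\<close>; at the largest value \<open>u = a + b\<close> it equals
  \<open>(1 + ab)\<^sup>2 / ((2 - a - b)\<^sup>2 + 4ab)\<close>, which is increasing in \<open>a\<close> and in \<open>b\<close>, hence at most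
  its value \<open>(1 + r\<^sub>u\<^sup>2)\<^sup>2 / (4(1 - 2r\<^sub>u + 2r\<^sub>u\<^sup>2))\<close> at \<open>a = b = r\<^sub>u\<close>. The upper constant is attained
  by antipodal points of norm \<open>r\<^sub>u\<close>; the lower one is approached by nearby points of equal
  norm close to \<open>r\<^sub>l\<close>, which needs a second dimension.
\<close>

lemma tanh_artanh_real:
  fixes t :: real
  assumes "-1 < t" "t < 1"
  shows "tanh (artanh t) = t"
proof -
  define q where "q = (1 + t) / (1 - t)"
  have q: "q > 0" using assms by (simp add: q_def)
  have "artanh t = ln (sqrt q)" using q by (simp add: artanh_def q_def ln_sqrt)
  then have "tanh (artanh t) = ((sqrt q)\<^sup>2 - 1) / ((sqrt q)\<^sup>2 + 1)" using tanh_ln_real q by simp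
  also have "\<dots> = t" using assms q by (simp add: q_def field_simps)
  finally show ?thesis .
qed

lemma dist_bd_unit_ball:
  fixes x :: "'a::euclidean_space"
  assumes "norm x < 1"
  shows "dist_bd (ball 0 1) x = 1 - norm x"
proof -
  obtain z :: 'a where z: "norm z = 1" "dist x z = 1 - norm x"
  proof (cases "x = 0")
    case True
    obtain e :: 'a where "norm e = 1" using vector_choose_size zero_le_one by blast
    then show ?thesis using that True by simp
  next
    case False
    have "dist x (sgn x) = norm ((1 - 1 / norm x) *\<^sub>R x)"
      by (simp add: dist_norm sgn_div_norm scaleR_diff_left divide_inverse_commute)
    also have "\<dots> = 1 - norm x" using False assms by (simp add: abs_if field_simps)
    finally show ?thesis using that[of "sgn x"] False by (simp add: norm_sgn)
  qed
  then have nonempty: "sphere (0::'a) 1 \<noteq> {}" by auto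
  have "infdist x (sphere 0 1) \<le> 1 - norm x" using infdist_le[of z "sphere 0 1" x] z by simp
  moreover have "1 - norm x \<le> infdist x (sphere 0 1)"
    unfolding infdist_notempty[OF nonempty]
  proof (rule cINF_greatest[OF nonempty])
    fix w :: 'a assume "w \<in> sphere 0 1"
    then show "1 - norm x \<le> dist x w"
      using norm_triangle_ineq2[of w x] by (simp add: dist_norm norm_minus_commute)
  qed
  ultimately show ?thesis by (simp add: dist_bd_def)
qed

lemma ppf_unit_ball:
  fixes x y :: "'a::euclidean_space"
  assumes "norm x < 1" "norm y < 1"
  shows "ppf (ball 0 1) x y = norm (x - y) / sqrt ((norm (x - y))\<^sup>2 + 4 * (1 - norm x) * (1 - norm y))"
  using assms by (simp add: ppf_def dist_bd_unit_ball mult.assoc)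

lemma tanh_half_rho_ball:
  fixes x y :: "'a::euclidean_space"
  assumes "norm x < 1" "norm y < 1"
  shows "tanh (rho_ball x y / 2) =
    norm (x - y) / sqrt ((norm (x - y))\<^sup>2 + (1 - (norm x)\<^sup>2) * (1 - (norm y)\<^sup>2))"
proof -
  define u where "u = norm (x - y)"
  define C where "C = (1 - (norm x)\<^sup>2) * (1 - (norm y)\<^sup>2)"
  have "C > 0" using assms by (simp add: C_def abs_square_less_1)
  then have "0 \<le> u / sqrt (u\<^sup>2 + C)" "u / sqrt (u\<^sup>2 + C) < 1"
    using real_sqrt_less_mono[of "u\<^sup>2" "u\<^sup>2 + C"] by (simp_all add: u_def add_nonneg_pos)
  then show ?thesis
    using tanh_artanh_real[of "u / sqrt (u\<^sup>2 + C)"] by (simp add: rho_ball_def u_def C_def)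
qed

lemma tanh_half_rho_ball_pos:
  fixes x y :: "'a::euclidean_space"
  assumes "norm x < 1" "norm y < 1" "x \<noteq> y"
  shows "0 < tanh (rho_ball x y / 2)"
proof -
  have "0 < (1 - (norm x)\<^sup>2) * (1 - (norm y)\<^sup>2)" using assms by (simp add: abs_square_less_1)
  then show ?thesis using assms by (simp add: tanh_half_rho_ball add_nonneg_pos)
qed

lemma scaled_quotient_le:
  fixes u P Q k m :: real
  assumes "0 \<le> u" "0 < P" "0 < Q" "0 \<le> k" "0 \<le> m"
    and "k\<^sup>2 * (u\<^sup>2 + Q) \<le> m\<^sup>2 * (u\<^sup>2 + P)"
  shows "k * (u / sqrt (u\<^sup>2 + P)) \<le> m * (u / sqrt (u\<^sup>2 + Q))"
proof -
  have "k * sqrt (u\<^sup>2 + Q) \<le> m * sqrt (u\<^sup>2 + P)"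
    using real_sqrt_le_mono[OF assms(6)] assms(4,5) by (simp add: real_sqrt_mult)
  then have "u * (k * sqrt (u\<^sup>2 + Q)) \<le> u * (m * sqrt (u\<^sup>2 + P))"
    using assms(1) by (rule mult_left_mono)
  moreover have "0 < sqrt (u\<^sup>2 + P)" "0 < sqrt (u\<^sup>2 + Q)"
    using assms(2,3) by (simp_all add: add_nonneg_pos)
  ultimately show ?thesis by (simp add: field_simps)
qed

lemma scaled_quotient_less:
  fixes u P Q k m :: real
  assumes "0 < u" "0 < P" "0 < Q" "0 \<le> k" "0 \<le> m"
    and "k\<^sup>2 * (u\<^sup>2 + Q) < m\<^sup>2 * (u\<^sup>2 + P)"
  shows "k * (u / sqrt (u\<^sup>2 + P)) < m * (u / sqrt (u\<^sup>2 + Q))"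
proof -
  have "k * sqrt (u\<^sup>2 + Q) < m * sqrt (u\<^sup>2 + P)"
    using real_sqrt_less_mono[OF assms(6)] assms(4,5) by (simp add: real_sqrt_mult)
  then have "u * (k * sqrt (u\<^sup>2 + Q)) < u * (m * sqrt (u\<^sup>2 + P))"
    using assms(1) by (rule mult_strict_left_mono)
  moreover have "0 < sqrt (u\<^sup>2 + P)" "0 < sqrt (u\<^sup>2 + Q)"
    using assms(2,3) by (simp_all add: add_nonneg_pos)
  ultimately show ?thesis by (simp add: field_simps)
qed

lemma quotient_lower_bound:
  fixes r a b u :: real
  assumes "0 \<le> r" "r \<le> a" "r \<le> b" "a < 1" "b < 1" "0 \<le> u"
  shows "(1 + r) / 2 * (u / sqrt (u\<^sup>2 + (1 - a\<^sup>2) * (1 - b\<^sup>2)))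
    \<le> u / sqrt (u\<^sup>2 + 4 * (1 - a) * (1 - b))"
proof -
  have "(1 + r)\<^sup>2 \<le> (1 + a) * (1 + b)"
    using assms unfolding power2_eq_square by (intro mult_mono) auto
  then have "(1 + r)\<^sup>2 * (4 * (1 - a) * (1 - b)) \<le> ((1 + a) * (1 + b)) * (4 * (1 - a) * (1 - b))"
    using assms by (intro mult_right_mono) auto
  also have "\<dots> = 4 * ((1 - a\<^sup>2) * (1 - b\<^sup>2))" by (simp add: power2_eq_square algebra_simps)
  finally have "(1 + r)\<^sup>2 * (4 * (1 - a) * (1 - b)) \<le> 4 * ((1 - a\<^sup>2) * (1 - b\<^sup>2))" .
  moreover have "(1 + r)\<^sup>2 * u\<^sup>2 \<le> 2\<^sup>2 * u\<^sup>2"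
    using assms by (intro mult_right_mono power_mono) auto
  ultimately have "((1 + r) / 2)\<^sup>2 * (u\<^sup>2 + 4 * (1 - a) * (1 - b)) \<le> 1\<^sup>2 * (u\<^sup>2 + (1 - a\<^sup>2) * (1 - b\<^sup>2))"
    by (simp add: power_divide field_simps)
  moreover have "0 < (1 - a\<^sup>2) * (1 - b\<^sup>2)" using assms by (simp add: abs_square_less_1)
  moreover have "0 < 4 * (1 - a) * (1 - b)" using assms by simp
  ultimately show ?thesis
    using scaled_quotient_le[of u _ _ "(1 + r) / 2" 1] assms by simp
qed

lemma one_minus_two_r_plus_two_r_sq_pos:
  fixes r :: real
  shows "0 < 1 - 2 * r + 2 * r\<^sup>2"
proof -
  have "0 < (1 - r)\<^sup>2 + r\<^sup>2" by (auto simp: sum_power2_gt_zero_iff)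
  also have "\<dots> = 1 - 2 * r + 2 * r\<^sup>2" by (simp add: power2_eq_square algebra_simps)
  finally show ?thesis .
qed

text \<open>
  \<open>(1 + ab)\<^sup>2 / ((2 - a - b)\<^sup>2 + 4ab)\<close> is \<open>(p / th)\<^sup>2\<close> for the points \<open>a e\<close> and \<open>-b e\<close> on a diameter.
  Cross-multiplied, the difference below factors as \<open>(a' - a)\<close> times a polynomial that is
  linear in \<open>a + a'\<close> and in \<open>a a'\<close> with nonpositive coefficients, so it is minimal at
  \<open>a = a' = 1\<close>, where it equals \<open>2(1 - b\<^sup>2)\<^sup>2\<close>.
\<close>
lemma diametral_ratio_mono:
  fixes a a' b :: real
  assumes "0 \<le> a" "a \<le> a'" "a' \<le> 1" "0 \<le> b" "b \<le> 1"
  shows "(1 + a * b)\<^sup>2 * ((2 - a' - b)\<^sup>2 + 4 * a' * b) \<le> (1 + a' * b)\<^sup>2 * ((2 - a - b)\<^sup>2 + 4 * a * b)"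
proof -
  define s where "s = b ^ 4 - 4 * b ^ 3 + 4 * b\<^sup>2 - 1"
  define p where "p = 6 * b ^ 3 - 4 * b\<^sup>2 - 2 * b"
  define c where "c = 4 + 2 * b - 8 * b\<^sup>2 + 2 * b ^ 3"
  have "s = - ((1 - b)\<^sup>2 * (1 + 2 * b - b\<^sup>2))"
    by (simp add: s_def power2_eq_square power3_eq_cube power4_eq_xxxx algebra_simps)
  moreover have "b\<^sup>2 \<le> b" using assms by (simp add: power2_eq_square mult_left_le)
  ultimately have s: "s \<le> 0" using assms by simp
  have "p = - (2 * b * ((1 - b) * (1 + 3 * b)))"
    by (simp add: p_def power2_eq_square power3_eq_cube algebra_simps)
  then have p: "p \<le> 0" using assms by simp
  have sum: "2 * s \<le> (a + a') * s" using s assms by (intro mult_right_mono_neg) auto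
  have "a * a' \<le> 1" using assms by (simp add: mult_le_one)
  then have prod: "p \<le> (a * a') * p" using p by (metis mult_1 mult_right_mono_neg)
  have "c + 2 * s + p = 2 * (1 - b\<^sup>2)\<^sup>2"
    by (simp add: c_def s_def p_def power2_eq_square power3_eq_cube power4_eq_xxxx algebra_simps)
  then have "0 \<le> c + (a + a') * s + (a * a') * p" using sum prod by (smt (verit) zero_le_power2)
  moreover have "(1 + a' * b)\<^sup>2 * ((2 - a - b)\<^sup>2 + 4 * a * b) - (1 + a * b)\<^sup>2 * ((2 - a' - b)\<^sup>2 + 4 * a' * b)
      = (a' - a) * (c + (a + a') * s + (a * a') * p)"
    by (simp add: c_def s_def p_def power2_eq_square power3_eq_cube power4_eq_xxxx algebra_simps)
  ultimately show ?thesis using assms by (smt (verit) mult_nonneg_nonneg)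
qed

lemma diametral_ratio_le_max:
  fixes a b r :: real
  assumes "0 \<le> a" "a \<le> r" "0 \<le> b" "b \<le> r" "r < 1"
  shows "4 * (1 - 2 * r + 2 * r\<^sup>2) * (1 + a * b)\<^sup>2 \<le> (1 + r\<^sup>2)\<^sup>2 * ((2 - a - b)\<^sup>2 + 4 * a * b)"
proof -
  define G where "G = 1 - 2 * r + 2 * r\<^sup>2"
  define D where "D = (2 - r - b)\<^sup>2 + 4 * r * b"
  define E where "E = (2 - a - b)\<^sup>2 + 4 * a * b"
  have "(4 * G * (1 + a * b)\<^sup>2) * D = 4 * G * ((1 + a * b)\<^sup>2 * D)" by simp
  also have "\<dots> \<le> 4 * G * ((1 + r * b)\<^sup>2 * E)"
    using diametral_ratio_mono[of a r b] assms one_minus_two_r_plus_two_r_sq_pos[of r]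
    by (intro mult_left_mono) (simp_all add: G_def D_def E_def)
  also have "\<dots> = ((1 + r * b)\<^sup>2 * (4 * G)) * E" by simp
  also have "\<dots> \<le> ((1 + r\<^sup>2)\<^sup>2 * D) * E"
  proof (rule mult_right_mono)
    show "(1 + r * b)\<^sup>2 * (4 * G) \<le> (1 + r\<^sup>2)\<^sup>2 * D"
      using diametral_ratio_mono[of b r r] assms
      by (simp add: G_def D_def power2_eq_square algebra_simps)
    show "0 \<le> E" using assms by (simp add: E_def)
  qed
  finally have "(4 * G * (1 + a * b)\<^sup>2) * D \<le> ((1 + r\<^sup>2)\<^sup>2 * E) * D" by (simp add: ac_simps)
  moreover have "0 < D" using assms by (simp add: D_def add_pos_nonneg)
  ultimately show ?thesis by (simp add: G_def E_def)
qed

lemma quotient_upper_bound: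
  fixes a b r u :: real
  assumes "0 \<le> a" "a \<le> r" "0 \<le> b" "b \<le> r" "r < 1" "0 \<le> u" "u \<le> a + b"
  shows "u / sqrt (u\<^sup>2 + 4 * (1 - a) * (1 - b))
    \<le> (1 + r\<^sup>2) / (2 * sqrt (1 - 2 * r + 2 * r\<^sup>2)) * (u / sqrt (u\<^sup>2 + (1 - a\<^sup>2) * (1 - b\<^sup>2)))"
proof -
  define G where "G = 1 - 2 * r + 2 * r\<^sup>2"
  define M where "M = (1 + r\<^sup>2)\<^sup>2"
  define \<delta> where "\<delta> = (a + b)\<^sup>2 - u\<^sup>2"
  have G: "0 < G" using one_minus_two_r_plus_two_r_sq_pos by (simp add: G_def)
  have "4 * G - M = (1 - r) ^ 3 * (3 + r)"
    by (simp add: G_def M_def power2_eq_square power3_eq_cube algebra_simps)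
  moreover have "0 \<le> (1 - r) ^ 3 * (3 + r)" using assms by (intro mult_nonneg_nonneg) auto
  ultimately have "M \<le> 4 * G" by linarith
  moreover have "0 \<le> \<delta>" using assms by (simp add: \<delta>_def power_mono)
  ultimately have "M * \<delta> \<le> 4 * G * \<delta>" by (rule mult_right_mono)
  moreover have "4 * G * (1 + a * b)\<^sup>2 \<le> M * ((2 - a - b)\<^sup>2 + 4 * a * b)"
    using diametral_ratio_le_max[OF assms(1-5)] by (simp add: G_def M_def)
  ultimately have "4 * G * ((1 + a * b)\<^sup>2 - \<delta>) \<le> M * ((2 - a - b)\<^sup>2 + 4 * a * b - \<delta>)"
    by (simp add: right_diff_distrib)
  moreover have "u\<^sup>2 + (1 - a\<^sup>2) * (1 - b\<^sup>2) = (1 + a * b)\<^sup>2 - \<delta>"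
    "u\<^sup>2 + 4 * (1 - a) * (1 - b) = (2 - a - b)\<^sup>2 + 4 * a * b - \<delta>"
    by (simp_all add: \<delta>_def power2_eq_square algebra_simps)
  ultimately have "4 * G * (u\<^sup>2 + (1 - a\<^sup>2) * (1 - b\<^sup>2)) \<le> M * (u\<^sup>2 + 4 * (1 - a) * (1 - b))"
    by simp
  then have "1\<^sup>2 * (u\<^sup>2 + (1 - a\<^sup>2) * (1 - b\<^sup>2))
      \<le> ((1 + r\<^sup>2) / (2 * sqrt G))\<^sup>2 * (u\<^sup>2 + 4 * (1 - a) * (1 - b))"
    using G by (simp add: power_divide power_mult_distrib M_def field_simps)
  moreover have "0 < (1 - a\<^sup>2) * (1 - b\<^sup>2)" "0 < 4 * (1 - a) * (1 - b)"
    using assms by (simp_all add: abs_square_less_1)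
  ultimately show ?thesis
    using scaled_quotient_le[of u _ _ 1 "(1 + r\<^sup>2) / (2 * sqrt G)"] assms G by (simp add: G_def)
qed

lemma quotient_lower_bound_sharp:
  fixes a c :: real
  assumes "0 < a" "a < 1" "(1 + a) / 2 < c"
  obtains u where "0 < u" "u \<le> 2 * a"
    "u / sqrt (u\<^sup>2 + 4 * (1 - a) * (1 - a)) < c * (u / sqrt (u\<^sup>2 + (1 - a\<^sup>2) * (1 - a\<^sup>2)))"
proof -
  define d where "d = c\<^sup>2 * (4 * (1 - a) * (1 - a)) - (1 - a\<^sup>2) * (1 - a\<^sup>2)"
  have "d = (1 - a)\<^sup>2 * ((2 * c)\<^sup>2 - (1 + a)\<^sup>2)" by (simp add: d_def power2_eq_square algebra_simps)
  moreover have "(1 + a)\<^sup>2 < (2 * c)\<^sup>2" using assms by (intro power_strict_mono) auto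
  ultimately have d: "0 < d" using assms by simp
  define u where "u = min (2 * a) (sqrt d / 2)"
  have u: "0 < u" "u \<le> 2 * a" using assms d by (auto simp: u_def)
  have "u\<^sup>2 \<le> (sqrt d / 2)\<^sup>2" using u by (intro power_mono) (auto simp: u_def)
  then have "u\<^sup>2 < d" using d by (simp add: power_divide)
  moreover have "0 \<le> c\<^sup>2 * u\<^sup>2" by simp
  ultimately have "u\<^sup>2 + (1 - a\<^sup>2) * (1 - a\<^sup>2) < c\<^sup>2 * (u\<^sup>2 + 4 * (1 - a) * (1 - a))"
    unfolding d_def distrib_left by linarith
  moreover have "0 < (1 - a\<^sup>2) * (1 - a\<^sup>2)" "0 < 4 * (1 - a) * (1 - a)"
    using assms by (simp_all add: abs_square_less_1)
  ultimately show ?thesis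
    using that[OF u] scaled_quotient_less[of u _ _ 1 c] u assms by simp
qed

lemma exists_points_norm_dist:
  fixes u a :: real
  assumes "2 \<le> DIM('a)" "0 \<le> u" "u \<le> 2 * a"
  obtains x y :: "'a::euclidean_space" where "norm x = a" "norm y = a" "norm (x - y) = u"
proof -
  have a: "0 \<le> a" using assms by simp
  have "(u / 2)\<^sup>2 \<le> a\<^sup>2" using assms by (intro power_mono) auto
  then have "0 \<le> sqrt (a\<^sup>2 - (u / 2)\<^sup>2)" by simp
  then obtain e :: 'a where "norm e = sqrt (a\<^sup>2 - (u / 2)\<^sup>2)" by (rule vector_choose_size)
  with \<open>(u / 2)\<^sup>2 \<le> a\<^sup>2\<close> have e: "(norm e)\<^sup>2 = a\<^sup>2 - (u / 2)\<^sup>2" by simp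
  obtain f :: 'a where "f \<noteq> 0" "orthogonal e f" using orthogonal_to_vector_exists[OF assms(1)] .
  define g where "g = (u / 2 / norm f) *\<^sub>R f"
  have g: "norm g = u / 2" "orthogonal e g" "orthogonal e (- g)"
    using assms \<open>f \<noteq> 0\<close> \<open>orthogonal e f\<close> by (simp_all add: g_def orthogonal_clauses)
  have "(norm (e + g))\<^sup>2 = a\<^sup>2" "(norm (e + - g))\<^sup>2 = a\<^sup>2"
    using norm_add_Pythagorean[OF g(2)] norm_add_Pythagorean[OF g(3)] e g(1) by simp_all
  then have "norm (e + g) = a" "norm (e - g) = a"
    using a by (simp_all add: power2_eq_iff_nonneg)
  moreover have "norm ((e + g) - (e - g)) = u"
    using g(1) by (simp flip: scaleR_2)
  ultimately show ?thesis by (rule that)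
qed

lemma ppf_antipodal:
  fixes x :: "'a::euclidean_space"
  assumes "norm x < 1"
  shows "ppf (ball 0 1) x (- x) =
    (1 + (norm x)\<^sup>2) / (2 * sqrt (1 - 2 * norm x + 2 * (norm x)\<^sup>2)) * tanh (rho_ball x (- x) / 2)"
proof -
  define r where "r = norm x"
  have "(2 * r)\<^sup>2 + 4 * (1 - r) * (1 - r) = 2\<^sup>2 * (1 - 2 * r + 2 * r\<^sup>2)"
    by (simp add: power2_eq_square algebra_simps)
  then have sqrt_ppf: "sqrt ((2 * r)\<^sup>2 + 4 * (1 - r) * (1 - r)) = 2 * sqrt (1 - 2 * r + 2 * r\<^sup>2)"
    by (simp only: real_sqrt_mult real_sqrt_abs)
  have "norm (x - - x) = 2 * r" by (simp add: r_def flip: scaleR_2)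
  moreover have "(2 * r)\<^sup>2 + (1 - r\<^sup>2) * (1 - r\<^sup>2) = (1 + r\<^sup>2)\<^sup>2"
    by (simp add: power2_eq_square algebra_simps)
  moreover note sqrt_ppf
  moreover have "0 < 1 + r\<^sup>2" by (simp add: add_pos_nonneg)
  ultimately show ?thesis
    using assms by (simp add: ppf_unit_ball tanh_half_rho_ball flip: r_def)
qed

lemma ppf_lower_bound:
  fixes x y :: "'a::euclidean_space"
  assumes "0 \<le> r" "r \<le> norm x" "r \<le> norm y" "norm x < 1" "norm y < 1"
  shows "(1 + r) / 2 * tanh (rho_ball x y / 2) \<le> ppf (ball 0 1) x y"
  unfolding tanh_half_rho_ball[OF assms(4,5)] ppf_unit_ball[OF assms(4,5)]
  using assms by (intro quotient_lower_bound) auto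

lemma ppf_upper_bound:
  fixes x y :: "'a::euclidean_space"
  assumes "norm x \<le> r" "norm y \<le> r" "r < 1"
  shows "ppf (ball 0 1) x y \<le> (1 + r\<^sup>2) / (2 * sqrt (1 - 2 * r + 2 * r\<^sup>2)) * tanh (rho_ball x y / 2)"
proof -
  have xy: "norm x < 1" "norm y < 1" using assms by auto
  show ?thesis
    unfolding tanh_half_rho_ball[OF xy] ppf_unit_ball[OF xy]
    using assms norm_triangle_ineq4[of x y] by (intro quotient_upper_bound) auto
qed

lemma ppf_lower_bound_sharp:
  fixes rl ru c :: real
  assumes "2 \<le> DIM('a)" "0 \<le> rl" "rl \<le> ru" "0 < ru" "ru < 1" "(1 + rl) / 2 < c"
  obtains x y :: "'a::euclidean_space"
  where "rl \<le> norm x" "norm y = norm x" "norm x \<le> ru" "ppf (ball 0 1) x y < c * tanh (rho_ball x y / 2)"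
proof -
  define a where "a = max rl (min ru (c - 1 / 2))"
  have a: "0 < a" "rl \<le> a" "a \<le> ru" "(1 + a) / 2 < c" using assms by (auto simp: a_def)
  obtain u where u: "0 < u" "u \<le> 2 * a" and
    "u / sqrt (u\<^sup>2 + 4 * (1 - a) * (1 - a)) < c * (u / sqrt (u\<^sup>2 + (1 - a\<^sup>2) * (1 - a\<^sup>2)))"
    using quotient_lower_bound_sharp[of a c] a assms by auto
  moreover obtain x y :: 'a where xy: "norm x = a" "norm y = a" "norm (x - y) = u"
    using exists_points_norm_dist[OF assms(1) less_imp_le[OF u(1)] u(2)] by blast
  moreover have "a < 1" using a assms by simp
  ultimately have "ppf (ball 0 1) x y < c * tanh (rho_ball x y / 2)"
    by (simp add: ppf_unit_ball tanh_half_rho_ball)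
  with xy a show ?thesis by (intro that) auto
qed

lemma ppf_upper_bound_sharp:
  fixes r c :: real
  assumes "0 < r" "r < 1" "c < (1 + r\<^sup>2) / (2 * sqrt (1 - 2 * r + 2 * r\<^sup>2))"
  obtains x :: "'a::euclidean_space"
  where "norm x = r" "c * tanh (rho_ball x (- x) / 2) < ppf (ball 0 1) x (- x)"
proof -
  obtain x :: 'a where x: "norm x = r" using vector_choose_size assms(1) less_imp_le by blast
  then have "0 < tanh (rho_ball x (- x) / 2)"
    using assms by (intro tanh_half_rho_ball_pos) (auto simp: eq_neg_iff_add_eq_0 simp flip: scaleR_2)
  with assms(3) have "c * tanh (rho_ball x (- x) / 2)
      < (1 + r\<^sup>2) / (2 * sqrt (1 - 2 * r + 2 * r\<^sup>2)) * tanh (rho_ball x (- x) / 2)"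
    by (rule mult_strict_right_mono)
  also have "\<dots> = ppf (ball 0 1) x (- x)" using x assms by (simp add: ppf_antipodal)
  finally show ?thesis using that x by blast
qed

theorem theorem3p4:
  fixes rl ru :: real
  assumes dim: "DIM('a::euclidean_space) \<ge> 2"
    and r: "0 \<le> rl" "rl \<le> ru" "ru < 1"
  shows "(\<forall>x y :: 'a. x \<in> ball 0 1 \<and> y \<in> ball 0 1 \<and> rl \<le> norm x \<and> norm x \<le> norm y \<and> norm y \<le> ru \<longrightarrow>
            (1 + rl) / 2 * tanh (rho_ball x y / 2) \<le> ppf (ball 0 1) x y \<and>
            ppf (ball 0 1) x y \<le> (1 + ru\<^sup>2) / (2 * sqrt (1 - 2 * ru + 2 * ru\<^sup>2)) * tanh (rho_ball x y / 2))
      \<and> (0 < ru \<longrightarrow>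
          (\<forall>c > (1 + rl) / 2. \<exists>x y :: 'a. x \<in> ball 0 1 \<and> y \<in> ball 0 1 \<and> rl \<le> norm x \<and> norm x \<le> norm y \<and> norm y \<le> ru \<and>
              ppf (ball 0 1) x y < c * tanh (rho_ball x y / 2))
        \<and> (\<forall>c < (1 + ru\<^sup>2) / (2 * sqrt (1 - 2 * ru + 2 * ru\<^sup>2)). \<exists>x y :: 'a. x \<in> ball 0 1 \<and> y \<in> ball 0 1 \<and> rl \<le> norm x \<and> norm x \<le> norm y \<and> norm y \<le> ru \<and>
              c * tanh (rho_ball x y / 2) < ppf (ball 0 1) x y))"
proof (intro conjI allI impI)
  fix x y :: 'a
  assume "x \<in> ball 0 1 \<and> y \<in> ball 0 1 \<and> rl \<le> norm x \<and> norm x \<le> norm y \<and> norm y \<le> ru"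
  then have xy: "norm x < 1" "norm y < 1" "rl \<le> norm x" "norm x \<le> norm y" "norm y \<le> ru" by auto
  show "(1 + rl) / 2 * tanh (rho_ball x y / 2) \<le> ppf (ball 0 1) x y"
    using xy r by (intro ppf_lower_bound) auto
  show "ppf (ball 0 1) x y \<le> (1 + ru\<^sup>2) / (2 * sqrt (1 - 2 * ru + 2 * ru\<^sup>2)) * tanh (rho_ball x y / 2)"
    using xy r by (intro ppf_upper_bound) auto
next
  fix c :: real
  assume "0 < ru" "(1 + rl) / 2 < c"
  then obtain x y :: 'a where "rl \<le> norm x" "norm y = norm x" "norm x \<le> ru"
    "ppf (ball 0 1) x y < c * tanh (rho_ball x y / 2)"
    using ppf_lower_bound_sharp[OF dim r(1,2) _ r(3)] by blast
  then show "\<exists>x y :: 'a. x \<in> ball 0 1 \<and> y \<in> ball 0 1 \<and> rl \<le> norm x \<and> norm x \<le> norm y \<and>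
      norm y \<le> ru \<and> ppf (ball 0 1) x y < c * tanh (rho_ball x y / 2)"
    using r by (intro exI[of _ x] exI[of _ y]) auto
next
  fix c :: real
  assume "0 < ru" "c < (1 + ru\<^sup>2) / (2 * sqrt (1 - 2 * ru + 2 * ru\<^sup>2))"
  then obtain x :: 'a where "norm x = ru" "c * tanh (rho_ball x (- x) / 2) < ppf (ball 0 1) x (- x)"
    using ppf_upper_bound_sharp r(3) by blast
  then show "\<exists>x y :: 'a. x \<in> ball 0 1 \<and> y \<in> ball 0 1 \<and> rl \<le> norm x \<and> norm x \<le> norm y \<and>
      norm y \<le> ru \<and> c * tanh (rho_ball x y / 2) < ppf (ball 0 1) x y"
    using r by (intro exI[of _ x] exI[of _ "- x"]) auto
qed

end
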